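(* A $po$-$\Gamma$-semigroup $M$ is intra-regular if and only if for every fuzzy right ideal $f$ and every fuzzy left ideal $g$ of $M$, we have $f\wedge g\preceq g\circ f$.
   Context: Let $M$ and $\Gamma$ be nonempty sets with a map $M\times\Gamma\times M\to M$, $(a,\gamma,b)\mapsto a\gamma b$, satisfying $(a\gamma b)\mu c=a\gamma(b\mu c)$ for all $a,b,c\in M$, $\gamma,\mu\in\Gamma$. A $po$-$\Gamma$-semigroup is such an $M$ with a partial order $\le$ such that $a\le b$ implies $a\gamma c\le b\gamma c$ and $c\gamma a\le c\gamma b$ for all $c\in M$, $\gamma\in\Gamma$. For $H\subseteq M$, $(H]=\{t\in M: t\le h \text{ for some } h\in H\}$; $M\Gamma a\Gamma a\Gamma M=\{x\gamma a\mu a\rho y: x,y\in M,\gamma,\mu,\rho\in\Gamma\}$. $M$ is intra-regular if $a\in(M\Gamma a\Gamma a\Gamma M]$ for every $a\in M$. A fuzzy subset of $M$ is a map $M\to[0,1]$. For $a\in M$ let $A_a=\{(y,z)\in M\times M: a\le y\gamma z \text{ for some }\gamma\in\Gamma\}$. $(f\circ g)(a)=\bigvee_{(y,z)\in A_a}\min\{f(y),g(z)\}$ if $A_a\ne\emptyset$, and $0$ otherwise. $(f\wedge g)(a)=\min\{f(a),g(a)\}$; $f\preceq g$ means $f(a)\le g(a)$ for all $a$. A fuzzy right (resp. left) ideal is a fuzzy subset $f$ with $f(x\gamma y)\ge f(x)$ (resp. $f(x\gamma y)\ge f(y)$) for all $x,y\in M,\gamma\in\Gamma$, and $x\le y\Rightarrow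 f(x)\ge f(y)$. *)

theory Defs
  imports Complex_Main
begin

definition po_gamma_semigroup :: "('m \<Rightarrow> 'g \<Rightarrow> 'm \<Rightarrow> 'm) \<Rightarrow> ('m \<Rightarrow> 'm \<Rightarrow> bool) \<Rightarrow> bool" where
  "po_gamma_semigroup mult le \<longleftrightarrow>
     (\<forall>a b c \<gamma> \<mu>. mult (mult a \<gamma> b) \<mu> c = mult a \<gamma> (mult b \<mu> c)) \<and>
     (\<forall>a. le a a) \<and> (\<forall>a b. le a b \<and> le b a \<longrightarrow> a = b) \<and>
     (\<forall>a b c. le a b \<and> le b c \<longrightarrow> le a c) \<and>
     (\<forall>a b c \<gamma>. le a b \<longrightarrow> le (mult a \<gamma> c) (mult b \<gamma> c) \<and> le (mult c \<gamma> a) (mult c \<gamma> b))"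

definition down_closure :: "('m \<Rightarrow> 'm \<Rightarrow> bool) \<Rightarrow> 'm set \<Rightarrow> 'm set" where
  "down_closure le H = {t. \<exists>h\<in>H. le t h}"

definition intra_regular :: "('m \<Rightarrow> 'g \<Rightarrow> 'm \<Rightarrow> 'm) \<Rightarrow> ('m \<Rightarrow> 'm \<Rightarrow> bool) \<Rightarrow> bool" where
  "intra_regular mult le \<longleftrightarrow>
     (\<forall>a. a \<in> down_closure le
        {mult (mult (mult x \<gamma> a) \<mu> a) \<rho> y | x y \<gamma> \<mu> \<rho>. True})"

definition fuzzy_subset :: "('m \<Rightarrow> real) \<Rightarrow> bool" where
  "fuzzy_subset f \<longleftrightarrow> (\<forall>x. 0 \<le> f x \<and> f x \<le> 1)"

definition A_set :: "('m \<Rightarrow> 'g \<Rightarrow> 'm \<Rightarrow> 'm) \<Rightarrow> ('m \<Rightarrow> 'm \<Rightarrow> bool) \<Rightarrow> 'm \<Rightarrow> ('m \<times> 'm) set" where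
  "A_set mult le a = {(y, z). \<exists>\<gamma>. le a (mult y \<gamma> z)}"

definition fuzzy_comp :: "('m \<Rightarrow> 'g \<Rightarrow> 'm \<Rightarrow> 'm) \<Rightarrow> ('m \<Rightarrow> 'm \<Rightarrow> bool) \<Rightarrow>
    ('m \<Rightarrow> real) \<Rightarrow> ('m \<Rightarrow> real) \<Rightarrow> 'm \<Rightarrow> real" where
  "fuzzy_comp mult le f g a =
     (if A_set mult le a = {} then 0
      else Sup ((\<lambda>(y, z). min (f y) (g z)) ` A_set mult le a))"

definition fuzzy_inf :: "('m \<Rightarrow> real) \<Rightarrow> ('m \<Rightarrow> real) \<Rightarrow> 'm \<Rightarrow> real" where
  "fuzzy_inf f g a = min (f a) (g a)"

definition fuzzy_le :: "('m \<Rightarrow> real) \<Rightarrow> ('m \<Rightarrow> real) \<Rightarrow> bool" where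
  "fuzzy_le f g \<longleftrightarrow> (\<forall>a. f a \<le> g a)"

definition fuzzy_right_ideal :: "('m \<Rightarrow> 'g \<Rightarrow> 'm \<Rightarrow> 'm) \<Rightarrow> ('m \<Rightarrow> 'm \<Rightarrow> bool) \<Rightarrow> ('m \<Rightarrow> real) \<Rightarrow> bool" where
  "fuzzy_right_ideal mult le f \<longleftrightarrow> fuzzy_subset f \<and>
     (\<forall>x y \<gamma>. f (mult x \<gamma> y) \<ge> f x) \<and> (\<forall>x y. le x y \<longrightarrow> f x \<ge> f y)"

definition fuzzy_left_ideal :: "('m \<Rightarrow> 'g \<Rightarrow> 'm \<Rightarrow> 'm) \<Rightarrow> ('m \<Rightarrow> 'm \<Rightarrow> bool) \<Rightarrow> ('m \<Rightarrow> real) \<Rightarrow> bool" where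
  "fuzzy_left_ideal mult le f \<longleftrightarrow> fuzzy_subset f \<and>
     (\<forall>x y \<gamma>. f (mult x \<gamma> y) \<ge> f y) \<and> (\<forall>x y. le x y \<longrightarrow> f x \<ge> f y)"

end

theory Submission
  imports Defs "HOL-Library.Indicator_Function"
begin

text \<open>
  If \<open>M\<close> is intra-regular, every \<open>a\<close> lies below some \<open>(x\<gamma>a)\<mu>(a\<rho>y)\<close>; the two factors
  raise \<open>g\<close> and \<open>f\<close> above \<open>g a\<close> and \<open>f a\<close>, so \<open>min (f a) (g a)\<close> is below one of
  the values whose supremum defines \<open>(g \<circ> f)(a)\<close>. Conversely, test the inequality
  on the characteristic functions of the principal right ideal \<open>R(a) = (a \<union> a\<Gamma>M]\<close>
  and the principal left ideal \<open>L(a) = (a \<union> M\<Gamma>a]\<close>: it forces \<open>a \<le> y\<gamma>z\<close> with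
  \<open>y \<in> L(a)\<close>, \<open>z \<in> R(a)\<close>, and substituting this inequality into itself yields
  \<open>a \<in> (M\<Gamma>a\<Gamma>a\<Gamma>M]\<close>.
\<close>

lemma fuzzy_right_ideal_indicator:
  assumes "\<And>x y \<gamma>. x \<in> S \<Longrightarrow> mult x \<gamma> y \<in> S" and "down_closure le S \<subseteq> S"
  shows "fuzzy_right_ideal mult le (indicator S)"
  using assms unfolding fuzzy_right_ideal_def fuzzy_subset_def down_closure_def
  by (auto simp: indicator_def)

lemma fuzzy_left_ideal_indicator:
  assumes "\<And>x y \<gamma>. y \<in> S \<Longrightarrow> mult x \<gamma> y \<in> S" and "down_closure le S \<subseteq> S"
  shows "fuzzy_left_ideal mult le (indicator S)"
  using assms unfolding fuzzy_left_ideal_def fuzzy_subset_def down_closure_def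
  by (auto simp: indicator_def)

lemma fuzzy_comp_ge:
  assumes "fuzzy_subset f" and "(y, z) \<in> A_set mult le a"
  shows "min (g y) (f z) \<le> fuzzy_comp mult le g f a"
proof -
  have "bdd_above ((\<lambda>(y, z). min (g y) (f z)) ` A_set mult le a)"
    using assms(1) unfolding fuzzy_subset_def
    by (intro bdd_aboveI[of _ 1]) (auto simp: min_le_iff_disj)
  then show ?thesis
    using assms(2) unfolding fuzzy_comp_def by (auto intro: cSup_upper)
qed

lemma fuzzy_comp_indicator_pos:
  assumes "0 < fuzzy_comp mult le (indicator L) (indicator R) a"
  shows "\<exists>y\<in>L. \<exists>z\<in>R. (y, z) \<in> A_set mult le a"
proof (rule ccontr)
  let ?S = "(\<lambda>(y, z). min (indicator L y) (indicator R z :: real)) ` A_set mult le a"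
  assume "\<not> ?thesis"
  then have "\<forall>s\<in>?S. s \<le> 0"
    by (auto simp: indicator_def)
  then have "fuzzy_comp mult le (indicator L) (indicator R) a \<le> 0"
    unfolding fuzzy_comp_def by (auto intro: cSup_least)
  with assms show False by simp
qed

locale po_gamma =
  fixes mult :: "'m \<Rightarrow> 'g \<Rightarrow> 'm \<Rightarrow> 'm" and le :: "'m \<Rightarrow> 'm \<Rightarrow> bool"
  assumes po_gamma_semigroup: "po_gamma_semigroup mult le"
begin

lemma assoc: "mult (mult a \<gamma> b) \<mu> c = mult a \<gamma> (mult b \<mu> c)"
  and le_refl: "le a a"
  and le_trans: "le a b \<Longrightarrow> le b c \<Longrightarrow> le a c"
  and mult_mono_left: "le a b \<Longrightarrow> le (mult a \<gamma> c) (mult b \<gamma> c)"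
  and mult_mono_right: "le a b \<Longrightarrow> le (mult c \<gamma> a) (mult c \<gamma> b)"
  using po_gamma_semigroup unfolding po_gamma_semigroup_def by blast+

lemma mult_mono: "le a b \<Longrightarrow> le c d \<Longrightarrow> le (mult a \<gamma> c) (mult b \<gamma> d)"
  by (meson le_trans mult_mono_left mult_mono_right)

definition principal_left_ideal :: "'m \<Rightarrow> 'm set" where
  "principal_left_ideal a = down_closure le ({a} \<union> {mult x \<gamma> a | x \<gamma>. True})"

definition principal_right_ideal :: "'m \<Rightarrow> 'm set" where
  "principal_right_ideal a = down_closure le ({a} \<union> {mult a \<gamma> y | y \<gamma>. True})"

definition intra_regular_at :: "'m \<Rightarrow> bool" where
  "intra_regular_at a \<longleftrightarrow>
     a \<in> down_closure le {mult (mult (mult x \<gamma> a) \<mu> a) \<rho> y | x y \<gamma> \<mu> \<rho>. True}"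

lemma intra_regular_iff_at: "intra_regular mult le \<longleftrightarrow> (\<forall>a. intra_regular_at a)"
  unfolding intra_regular_def intra_regular_at_def ..

lemma down_closure_idem: "down_closure le (down_closure le H) \<subseteq> down_closure le H"
  unfolding down_closure_def by (blast intro: le_trans)

lemma mem_principal_left_ideal: "a \<in> principal_left_ideal a"
  and mem_principal_right_ideal: "a \<in> principal_right_ideal a"
  unfolding principal_left_ideal_def principal_right_ideal_def down_closure_def
  by (auto intro: le_refl)

lemma principal_left_ideal_mult:
  assumes "y \<in> principal_left_ideal a"
  shows "mult x \<gamma> y \<in> principal_left_ideal a"
proof -
  obtain u where "le y u" and u: "u = a \<or> (\<exists>x' \<delta>. u = mult x' \<delta> a)"
    using assms unfolding principal_left_ideal_def down_closure_def by blast
  then have "le (mult x \<gamma> y) (mult x \<gamma> u)"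
    by (intro mult_mono_right)
  with u show ?thesis
    unfolding principal_left_ideal_def down_closure_def by (auto simp flip: assoc; blast)
qed

lemma principal_right_ideal_mult:
  assumes "x \<in> principal_right_ideal a"
  shows "mult x \<gamma> y \<in> principal_right_ideal a"
proof -
  obtain u where "le x u" and u: "u = a \<or> (\<exists>y' \<delta>. u = mult a \<delta> y')"
    using assms unfolding principal_right_ideal_def down_closure_def by blast
  then have "le (mult x \<gamma> y) (mult u \<gamma> y)"
    by (intro mult_mono_left)
  with u show ?thesis
    unfolding principal_right_ideal_def down_closure_def by (auto simp: assoc; blast)
qed

lemma down_closure_principal_left_ideal: "down_closure le (principal_left_ideal a) \<subseteq> principal_left_ideal a"
  and down_closure_principal_right_ideal: "down_closure le (principal_right_ideal a) \<subseteq> principal_right_ideal a"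
  unfolding principal_left_ideal_def principal_right_ideal_def by (rule down_closure_idem)+

lemma intra_regular_atI: "le a (mult (mult (mult x \<gamma> a) \<mu> a) \<rho> y) \<Longrightarrow> intra_regular_at a"
  unfolding intra_regular_at_def down_closure_def by blast

lemma intra_regular_at_if_le_left:
  assumes "le a (mult (mult x \<delta> a) \<gamma> a)"
  shows "intra_regular_at a"
proof -
  have "le (mult (mult x \<delta> a) \<gamma> a) (mult (mult x \<delta> (mult (mult x \<delta> a) \<gamma> a)) \<gamma> a)"
    using assms by (intro mult_mono_left mult_mono_right)
  then have "le a (mult (mult (mult (mult x \<delta> x) \<delta> a) \<gamma> a) \<gamma> a)"
    using assms by (auto simp: assoc intro: le_trans)
  then show ?thesis by (rule intra_regular_atI)
qed

lemma intra_regular_at_if_le_right: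
  assumes "le a (mult a \<gamma> (mult a \<epsilon> w))"
  shows "intra_regular_at a"
proof -
  have "le (mult a \<gamma> (mult a \<epsilon> w)) (mult a \<gamma> (mult (mult a \<gamma> (mult a \<epsilon> w)) \<epsilon> w))"
    using assms by (intro mult_mono_left mult_mono_right)
  then have "le a (mult (mult (mult a \<gamma> a) \<gamma> a) \<epsilon> (mult w \<epsilon> w))"
    using assms by (auto simp: assoc intro: le_trans)
  then show ?thesis by (rule intra_regular_atI)
qed

lemma intra_regular_at_if_le_square:
  assumes "le a (mult a \<gamma> a)"
  shows "intra_regular_at a"
proof (rule intra_regular_at_if_le_left)
  show "le a (mult (mult a \<gamma> a) \<gamma> a)"
    using assms mult_mono_left[OF assms] by (rule le_trans)
qed

lemma intra_regular_at_if_le_mult: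
  assumes "le a (mult y \<gamma> z)" and "y \<in> principal_left_ideal a" and "z \<in> principal_right_ideal a"
  shows "intra_regular_at a"
proof -
  obtain u v where uv: "le y u" "le z v"
    and u: "u = a \<or> (\<exists>x \<delta>. u = mult x \<delta> a)" and v: "v = a \<or> (\<exists>w \<epsilon>. v = mult a \<epsilon> w)"
    using assms(2,3) unfolding principal_left_ideal_def principal_right_ideal_def down_closure_def
    by blast
  have a_le: "le a (mult u \<gamma> v)"
    using assms(1) mult_mono[OF uv] by (rule le_trans)
  from u v show ?thesis
  proof (elim disjE exE)
    assume "u = a" "v = a"
    with a_le show ?thesis by (auto intro: intra_regular_at_if_le_square)
  next
    fix w \<epsilon> assume "u = a" "v = mult a \<epsilon> w"
    with a_le show ?thesis by (auto intro: intra_regular_at_if_le_right)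
  next
    fix x \<delta> assume "u = mult x \<delta> a" "v = a"
    with a_le show ?thesis by (auto intro: intra_regular_at_if_le_left)
  next
    fix x \<delta> w \<epsilon> assume "u = mult x \<delta> a" "v = mult a \<epsilon> w"
    with a_le show ?thesis by (auto simp: assoc intro: intra_regular_atI)
  qed
qed

lemma fuzzy_inf_le_comp_if_intra_regular:
  assumes "intra_regular mult le"
    and f: "fuzzy_right_ideal mult le f" and g: "fuzzy_left_ideal mult le g"
  shows "fuzzy_le (fuzzy_inf f g) (fuzzy_comp mult le g f)"
  unfolding fuzzy_le_def
proof
  fix a
  obtain x y \<gamma> \<mu> \<rho> where "le a (mult (mult (mult x \<gamma> a) \<mu> a) \<rho> y)"
    using assms(1) unfolding intra_regular_def down_closure_def by blast
  then have pair: "(mult x \<gamma> a, mult a \<rho> y) \<in> A_set mult le a"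
    unfolding A_set_def by (auto simp: assoc)
  have "g a \<le> g (mult x \<gamma> a)" and "f a \<le> f (mult a \<rho> y)"
    using f g unfolding fuzzy_right_ideal_def fuzzy_left_ideal_def by blast+
  then have "fuzzy_inf f g a \<le> min (g (mult x \<gamma> a)) (f (mult a \<rho> y))"
    unfolding fuzzy_inf_def by linarith
  also have "\<dots> \<le> fuzzy_comp mult le g f a"
    using f pair unfolding fuzzy_right_ideal_def by (blast intro: fuzzy_comp_ge)
  finally show "fuzzy_inf f g a \<le> fuzzy_comp mult le g f a" .
qed

lemma intra_regular_if_fuzzy_inf_le_comp:
  assumes "\<And>f g. fuzzy_right_ideal mult le f \<Longrightarrow> fuzzy_left_ideal mult le g \<Longrightarrow>
      fuzzy_le (fuzzy_inf f g) (fuzzy_comp mult le g f)"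
  shows "intra_regular mult le"
  unfolding intra_regular_iff_at
proof
  fix a
  let ?L = "principal_left_ideal a" and ?R = "principal_right_ideal a"
  have "fuzzy_right_ideal mult le (indicator ?R)"
    by (intro fuzzy_right_ideal_indicator principal_right_ideal_mult down_closure_principal_right_ideal)
  moreover have "fuzzy_left_ideal mult le (indicator ?L)"
    by (intro fuzzy_left_ideal_indicator principal_left_ideal_mult down_closure_principal_left_ideal)
  ultimately have "fuzzy_inf (indicator ?R) (indicator ?L) a \<le>
      fuzzy_comp mult le (indicator ?L) (indicator ?R) a"
    using assms unfolding fuzzy_le_def by blast
  then have "0 < fuzzy_comp mult le (indicator ?L) (indicator ?R) a"
    by (simp add: fuzzy_inf_def mem_principal_left_ideal mem_principal_right_ideal)
  then obtain y z \<gamma> where "y \<in> ?L" "z \<in> ?R" "le a (mult y \<gamma> z)"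
    by (auto simp: A_set_def dest!: fuzzy_comp_indicator_pos)
  then show "intra_regular_at a"
    by (blast intro: intra_regular_at_if_le_mult)
qed

end

theorem theorem16:
  fixes mult :: "'m \<Rightarrow> 'g \<Rightarrow> 'm \<Rightarrow> 'm" and le :: "'m \<Rightarrow> 'm \<Rightarrow> bool"
  assumes "po_gamma_semigroup mult le"
  shows "intra_regular mult le \<longleftrightarrow>
    (\<forall>f g. fuzzy_right_ideal mult le f \<and> fuzzy_left_ideal mult le g \<longrightarrow>
       fuzzy_le (fuzzy_inf f g) (fuzzy_comp mult le g f))"
proof -
  interpret po_gamma mult le
    using assms by unfold_locales
  show ?thesis
    using fuzzy_inf_le_comp_if_intra_regular intra_regular_if_fuzzy_inf_le_comp by blast
qed

end
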